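(* Let $p,n\ge1$ and let $u_j,v_j\in E^p$ for $j=1,\dots,n$. Put $u=\sum_{j=1}^n u_j$ and $v=\sum_{j=1}^n v_j$. Then $$D(u,v)\le\sum_{j=1}^n D(u_j,v_j).$$
   Context: A fuzzy subset of $\mathbb{R}^p$ is a function $u:\mathbb{R}^p\to[0,1]$. Its $\alpha$-cut is $[u]_\alpha=\{x\in\mathbb{R}^p: u(x)\ge\alpha\}$ for $\alpha\in(0,1]$, and $[u]_0=\overline{\{x\in\mathbb{R}^p: u(x)>0\}}$. The set $E^p$ of $p$-dimensional fuzzy numbers consists of all fuzzy subsets $u$ of $\mathbb{R}^p$ such that $[u]_\alpha$ is a nonempty compact convex subset of $\mathbb{R}^p$ for every $\alpha\in[0,1]$. For $u,v\in E^p$, $u+v$ is the element of $E^p$ determined by $[u+v]_\alpha=\{x+y: x\in[u]_\alpha,\ y\in[v]_\alpha\}$ for all $\alpha\in[0,1]$. The sendograph of $u\in E^p$ is $\mathrm{send}\,u=\{(x,\alpha)\in[u]_0\times[0,1]: u(x)\ge\alpha\}\subset\mathbb{R}^{p+1}$. For nonempty compact $U,V\subset\mathbb{R}^{p+1}$ (with the Euclidean metric $d$), the Hausdorff metric is $H(U,V)=\max\{H^*(U,V),H^*(V,U)\}$ with $H^*(U,V)=\sup_{a\in U}\inf_{b\in V}d(a,b)$. The sendograph metric on $E^p$ is $D(u,v)=H(\mathrm{send}\,u,\mathrm{send}\,v)$. *)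

theory Defs
  imports "HOL-Analysis.Analysis"
begin

text \<open>Fuzzy subsets of R^p are modelled as functions 'a \<Rightarrow> real on a Euclidean space 'a
  (dimension p = DIM('a) \<ge> 1), with values in [0,1].\<close>

definition fcut :: "('a::euclidean_space \<Rightarrow> real) \<Rightarrow> real \<Rightarrow> 'a set" where
  "fcut u \<alpha> = (if \<alpha> = 0 then closure {x. u x > 0} else {x. u x \<ge> \<alpha>})"

definition fuzzy_number :: "('a::euclidean_space \<Rightarrow> real) \<Rightarrow> bool" where
  "fuzzy_number u \<longleftrightarrow> (\<forall>x. 0 \<le> u x \<and> u x \<le> 1) \<and>
     (\<forall>\<alpha>\<in>{0..1}. fcut u \<alpha> \<noteq> {} \<and> compact (fcut u \<alpha>) \<and> convex (fcut u \<alpha>))"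

definition set_plus :: "'a::euclidean_space set \<Rightarrow> 'a set \<Rightarrow> 'a set" where
  "set_plus A B = {x + y | x y. x \<in> A \<and> y \<in> B}"

text \<open>Sum of fuzzy numbers: the fuzzy set whose alpha-cuts are the Minkowski sums of the
  alpha-cuts (for fuzzy numbers this is the unique element of E^p so determined).\<close>
definition fadd :: "('a::euclidean_space \<Rightarrow> real) \<Rightarrow> ('a \<Rightarrow> real) \<Rightarrow> ('a \<Rightarrow> real)" where
  "fadd u v = (\<lambda>z. Sup ({0} \<union> {\<alpha> \<in> {0..1}. z \<in> set_plus (fcut u \<alpha>) (fcut v \<alpha>)}))"

primrec fsum :: "(nat \<Rightarrow> ('a::euclidean_space \<Rightarrow> real)) \<Rightarrow> nat \<Rightarrow> ('a \<Rightarrow> real)" where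
  "fsum u 0 = indicator {0}"
| "fsum u (Suc n) = fadd (fsum u n) (u (Suc n))"

definition sendograph :: "('a::euclidean_space \<Rightarrow> real) \<Rightarrow> ('a \<times> real) set" where
  "sendograph u = {(x, \<alpha>). x \<in> fcut u 0 \<and> \<alpha> \<in> {0..1} \<and> u x \<ge> \<alpha>}"

definition hausdorff_semi :: "'b::metric_space set \<Rightarrow> 'b set \<Rightarrow> real" where
  "hausdorff_semi U V = (SUP a\<in>U. INF b\<in>V. dist a b)"

definition hausdorff_dist :: "'b::metric_space set \<Rightarrow> 'b set \<Rightarrow> real" where
  "hausdorff_dist U V = max (hausdorff_semi U V) (hausdorff_semi V U)"

definition send_dist :: "('a::euclidean_space \<Rightarrow> real) \<Rightarrow> ('a \<Rightarrow> real) \<Rightarrow> real" where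
  "send_dist u v = hausdorff_dist (sendograph u) (sendograph v)"

end

theory Submission
  imports Defs
begin

text \<open>By induction it suffices to treat two summands. Every \<open>\<alpha>\<close>-cut of \<open>u + v\<close> is the Minkowski
  sum of the \<open>\<alpha>\<close>-cuts of \<open>u\<close> and \<open>v\<close>: for \<open>\<alpha> > 0\<close> by a nested-compact-sets argument, for \<open>\<alpha> = 0\<close>
  by taking closures. Hence a point \<open>(x + y, \<alpha>)\<close> of \<open>send (u\<^sub>1 + u\<^sub>2)\<close> comes from
  \<open>(x, \<alpha>) \<in> send u\<^sub>1\<close> and \<open>(y, \<alpha>) \<in> send u\<^sub>2\<close>; approximating these by \<open>(x', \<beta>) \<in> send v\<^sub>1\<close> and
  \<open>(y', \<gamma>) \<in> send v\<^sub>2\<close>, the point \<open>(x' + y', min \<beta> \<gamma>)\<close> lies in \<open>send (v\<^sub>1 + v\<^sub>2)\<close> and is within the sum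
  of the two distances, since the level \<open>min \<beta> \<gamma>\<close> is charged to only one of the summands.\<close>

lemma set_plus_eq_sum: "set_plus A B = A + B"
  by (auto simp: set_plus_def Set_Algebras.set_plus_def)

lemma compact_set_plus:
  fixes A B :: "'a::euclidean_space set"
  shows "compact A \<Longrightarrow> compact B \<Longrightarrow> compact (A + B)"
  using compact_sums[of A B] by (simp add: set_plus_eq_sum[symmetric] set_plus_def)

lemma dist_Pair_add_le:
  fixes x y x' y' :: "'a::real_normed_vector" and \<alpha> \<beta> \<gamma> \<delta> :: real
  shows "dist (x + y, \<alpha>) (x' + y', \<beta>) \<le> dist (x, \<alpha>) (x', \<beta>) + dist (y, \<gamma>) (y', \<delta>)"
proof -
  have "(x + y, \<alpha>) - (x' + y', \<beta>) = ((x, \<alpha>) - (x', \<beta>)) + (y - y', 0)" by simp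
  then have "dist (x + y, \<alpha>) (x' + y', \<beta>) \<le> dist (x, \<alpha>) (x', \<beta>) + norm (y - y', 0::real)"
    by (metis dist_norm norm_triangle_ineq)
  also have "norm (y - y', 0::real) = dist y y'" by (simp add: norm_Pair dist_norm)
  also have "dist y y' \<le> dist (y, \<gamma>) (y', \<delta>)" using dist_fst_le[of "(y, \<gamma>)" "(y', \<delta>)"] by simp
  finally show ?thesis by simp
qed

lemma dist_Pair_add_min_le:
  fixes x y x' y' :: "'a::real_normed_vector" and \<alpha> \<beta> \<gamma> :: real
  shows "dist (x + y, \<alpha>) (x' + y', min \<beta> \<gamma>) \<le> dist (x, \<alpha>) (x', \<beta>) + dist (y, \<alpha>) (y', \<gamma>)"
proof (cases "\<beta> \<le> \<gamma>")
  case True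
  then show ?thesis using dist_Pair_add_le[of x y \<alpha> x' y' \<beta> \<alpha> \<gamma>] by simp
next
  case False
  then show ?thesis using dist_Pair_add_le[of y x \<alpha> y' x' \<gamma> \<alpha> \<beta>] by (simp add: add.commute)
qed

lemma hausdorff_semi_le:
  fixes U V :: "'b::metric_space set"
  assumes "U \<noteq> {}" and approx: "\<And>p e. p \<in> U \<Longrightarrow> 0 < e \<Longrightarrow> \<exists>q\<in>V. dist p q < d + e"
  shows "hausdorff_semi U V \<le> d"
  unfolding hausdorff_semi_def
proof (rule cSUP_least[OF \<open>U \<noteq> {}\<close>])
  fix p assume "p \<in> U"
  have bdd: "bdd_below ((\<lambda>q. dist p q) ` V)" by (rule bdd_belowI[of _ 0]) auto
  show "(INF q\<in>V. dist p q) \<le> d"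
  proof (rule field_le_epsilon)
    fix e :: real assume "0 < e"
    then obtain q where "q \<in> V" "dist p q < d + e" using approx \<open>p \<in> U\<close> by blast
    then show "(INF q\<in>V. dist p q) \<le> d + e" using cINF_lower[OF bdd, of q] by auto
  qed
qed

lemma hausdorff_semi_approx:
  fixes U V :: "'b::metric_space set"
  assumes "bounded U" "V \<noteq> {}" "p \<in> U" "0 < e"
  shows "\<exists>q\<in>V. dist p q < hausdorff_semi U V + e"
proof -
  obtain q0 where q0: "q0 \<in> V" using assms by auto
  obtain c B where B: "\<And>a. a \<in> U \<Longrightarrow> dist c a \<le> B"
    using \<open>bounded U\<close> unfolding bounded_def by blast
  have bdd_below: "bdd_below ((\<lambda>q. dist a q) ` V)" for a by (rule bdd_belowI[of _ 0]) auto
  have "(INF q\<in>V. dist a q) \<le> B + dist c q0" if "a \<in> U" for a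
  proof -
    have "(INF q\<in>V. dist a q) \<le> dist a q0" by (rule cINF_lower[OF bdd_below q0])
    also have "\<dots> \<le> dist c a + dist c q0" by (rule dist_triangle3)
    finally show ?thesis using B[OF that] by linarith
  qed
  then have "bdd_above ((\<lambda>a. INF q\<in>V. dist a q) ` U)" by (intro bdd_aboveI2)
  then have "(INF q\<in>V. dist p q) \<le> hausdorff_semi U V"
    unfolding hausdorff_semi_def using \<open>p \<in> U\<close> by (rule cSUP_upper2) simp
  then have "(INF q\<in>V. dist p q) < hausdorff_semi U V + e" using \<open>0 < e\<close> by linarith
  then show ?thesis using cINF_less_iff[OF \<open>V \<noteq> {}\<close> bdd_below] by blast
qed

lemma hausdorff_semi_self:
  fixes V :: "'b::metric_space set"
  assumes "V \<noteq> {}"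
  shows "hausdorff_semi V V = 0"
proof -
  have bdd: "bdd_below ((\<lambda>q. dist a q) ` V)" for a by (rule bdd_belowI[of _ 0]) auto
  have "(INF q\<in>V. dist a q) = 0" if "a \<in> V" for a
    using cINF_lower[OF bdd[of a] that] cINF_greatest[OF assms, of 0 "dist a"] by simp
  then show ?thesis using assms by (simp add: hausdorff_semi_def)
qed

lemma fcut_pos: "0 < \<alpha> \<Longrightarrow> fcut u \<alpha> = {x. \<alpha> \<le> u x}"
  by (simp add: fcut_def)

lemma fcut_antimono:
  assumes "0 \<le> \<beta>" "\<beta> \<le> \<alpha>"
  shows "fcut u \<alpha> \<subseteq> fcut u \<beta>"
proof (cases "\<beta> = 0")
  case True
  show ?thesis
  proof (cases "\<alpha> = 0")
    case False
    with assms have "fcut u \<alpha> \<subseteq> {x. 0 < u x}" by (auto simp: fcut_def)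
    with True show ?thesis using closure_subset by (fastforce simp: fcut_def)
  qed (use True in simp)
qed (use assms in \<open>auto simp: fcut_def\<close>)

lemma fcut_sum_antimono:
  "0 \<le> \<beta> \<Longrightarrow> \<beta> \<le> \<alpha> \<Longrightarrow> fcut u \<alpha> + fcut v \<alpha> \<subseteq> fcut u \<beta> + fcut v \<beta>"
  by (intro set_plus_mono2 fcut_antimono)

lemma fuzzy_number_le_one: "fuzzy_number u \<Longrightarrow> u x \<le> 1"
  by (simp add: fuzzy_number_def)

lemma fuzzy_number_cut:
  assumes "fuzzy_number u" "0 \<le> \<alpha>" "\<alpha> \<le> 1"
  shows "fcut u \<alpha> \<noteq> {}" "compact (fcut u \<alpha>)" "convex (fcut u \<alpha>)"
  using assms unfolding fuzzy_number_def by auto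

lemma mem_fcut_sum_of_lower_levels:
  fixes u v :: "'a::euclidean_space \<Rightarrow> real"
  assumes u: "fuzzy_number u" and v: "fuzzy_number v" and \<alpha>: "0 < \<alpha>" "\<alpha> \<le> 1"
    and lower: "\<And>\<beta>. 0 < \<beta> \<Longrightarrow> \<beta> < \<alpha> \<Longrightarrow> z \<in> fcut u \<beta> + fcut v \<beta>"
  shows "z \<in> fcut u \<alpha> + fcut v \<alpha>"
proof -
  define K where "K \<beta> = {x. x \<in> fcut u \<beta> \<and> z - x \<in> fcut v \<beta>}" for \<beta>
  have "\<Inter> (K ` {0<..<\<alpha>}) \<noteq> {}"
  proof (rule compact_chain)
    fix S assume "S \<in> K ` {0<..<\<alpha>}"
    then obtain \<beta> where \<beta>: "0 < \<beta>" "\<beta> < \<alpha>" and S: "S = K \<beta>" by auto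
    have "K \<beta> = fcut u \<beta> \<inter> (\<lambda>y. z - y) ` fcut v \<beta>"
      by (force simp: K_def)
    moreover have "compact ((\<lambda>y. z - y) ` fcut v \<beta>)"
      using fuzzy_number_cut[OF v, of \<beta>] \<beta> \<alpha>
      by (intro compact_continuous_image continuous_intros) auto
    ultimately show "compact S"
      unfolding S using fuzzy_number_cut[OF u, of \<beta>] \<beta> \<alpha> by auto
  next
    have "K \<beta> \<noteq> {}" if \<beta>: "0 < \<beta>" "\<beta> < \<alpha>" for \<beta>
    proof -
      obtain x y where "x \<in> fcut u \<beta>" "y \<in> fcut v \<beta>" "z = x + y"
        using lower[OF \<beta>] by (auto elim: set_plus_elim)
      then have "x \<in> K \<beta>" by (simp add: K_def)
      then show ?thesis by auto
    qed
    then show "{} \<notin> K ` {0<..<\<alpha>}" by force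
  next
    have "K \<gamma> \<subseteq> K \<beta>" if "0 < \<beta>" "\<beta> \<le> \<gamma>" for \<beta> \<gamma>
      using fcut_antimono[of \<beta> \<gamma> u] fcut_antimono[of \<beta> \<gamma> v] that by (auto simp: K_def)
    then show "S \<subseteq> T \<or> T \<subseteq> S" if "S \<in> K ` {0<..<\<alpha>} \<and> T \<in> K ` {0<..<\<alpha>}" for S T
      using that by (metis greaterThanLessThan_iff imageE nle_le)
  qed
  then obtain x where "x \<in> \<Inter> (K ` {0<..<\<alpha>})"
    by (meson ex_in_conv)
  then have "\<beta> \<le> u x \<and> \<beta> \<le> v (z - x)" if "0 < \<beta>" "\<beta> < \<alpha>" for \<beta>
    using that by (simp add: K_def fcut_pos)
  then have "\<alpha> \<le> u x" "\<alpha> \<le> v (z - x)"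
    using dense_le_bounded[OF \<alpha>(1)] by blast+
  then have "x + (z - x) \<in> fcut u \<alpha> + fcut v \<alpha>"
    using \<alpha> by (intro set_plus_intro) (auto simp: fcut_pos)
  then show ?thesis by simp
qed

lemma fadd_nonneg: "0 \<le> fadd u v z"
  unfolding fadd_def by (rule cSup_upper) (auto intro: bdd_aboveI[of _ 1])

lemma fadd_le_one: "fadd u v z \<le> 1"
  unfolding fadd_def by (rule cSup_least) auto

lemma le_fadd_iff:
  fixes u v :: "'a::euclidean_space \<Rightarrow> real"
  assumes u: "fuzzy_number u" and v: "fuzzy_number v" and \<alpha>: "0 < \<alpha>" "\<alpha> \<le> 1"
  shows "\<alpha> \<le> fadd u v z \<longleftrightarrow> z \<in> fcut u \<alpha> + fcut v \<alpha>"
proof -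
  let ?S = "{0} \<union> {\<alpha> \<in> {0..1}. z \<in> set_plus (fcut u \<alpha>) (fcut v \<alpha>)}"
  have bdd: "bdd_above ?S" by (rule bdd_aboveI[of _ 1]) auto
  show ?thesis
  proof
    assume le: "\<alpha> \<le> fadd u v z"
    show "z \<in> fcut u \<alpha> + fcut v \<alpha>"
    proof (rule mem_fcut_sum_of_lower_levels[OF u v \<alpha>])
      fix \<beta> assume \<beta>: "0 < \<beta>" "\<beta> < \<alpha>"
      then have "\<beta> < Sup ?S" using le by (simp add: fadd_def)
      then obtain s where "s \<in> ?S" "\<beta> < s" using less_cSup_iff[OF _ bdd] by blast
      with \<beta> have "z \<in> fcut u s + fcut v s" "\<beta> \<le> s" by (auto simp: set_plus_eq_sum)
      then show "z \<in> fcut u \<beta> + fcut v \<beta>"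
        using fcut_sum_antimono[of \<beta> s u v] \<beta> by auto
    qed
  next
    assume "z \<in> fcut u \<alpha> + fcut v \<alpha>"
    then have "\<alpha> \<in> ?S" using \<alpha> by (simp add: set_plus_eq_sum)
    then show "\<alpha> \<le> fadd u v z" unfolding fadd_def by (rule cSup_upper[OF _ bdd])
  qed
qed

lemma fcut_fadd:
  fixes u v :: "'a::euclidean_space \<Rightarrow> real"
  assumes u: "fuzzy_number u" and v: "fuzzy_number v" and \<alpha>: "0 \<le> \<alpha>" "\<alpha> \<le> 1"
  shows "fcut (fadd u v) \<alpha> = fcut u \<alpha> + fcut v \<alpha>"
proof (cases "\<alpha> = 0")
  case False
  with \<alpha> show ?thesis by (auto simp: fcut_pos le_fadd_iff[OF u v])
next
  case True
  have "z \<in> fcut u 0 + fcut v 0" if "0 < fadd u v z" for z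
  proof -
    have "z \<in> fcut u (fadd u v z) + fcut v (fadd u v z)"
      using le_fadd_iff[OF u v that fadd_le_one, where z = z] by simp
    also have "\<dots> \<subseteq> fcut u 0 + fcut v 0"
      by (rule fcut_sum_antimono) (simp_all add: fadd_nonneg)
    finally show ?thesis .
  qed
  then have "{z. 0 < fadd u v z} \<subseteq> fcut u 0 + fcut v 0" by blast
  moreover have "closed (fcut u 0 + fcut v 0)"
    using fuzzy_number_cut[OF u, of 0] fuzzy_number_cut[OF v, of 0]
    by (simp add: compact_imp_closed compact_set_plus)
  ultimately have "fcut (fadd u v) 0 \<subseteq> fcut u 0 + fcut v 0"
    by (simp add: fcut_def closure_minimal)
  have "{x. 0 < u x} + {y. 0 < v y} \<subseteq> {z. 0 < fadd u v z}"
  proof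
    fix z assume "z \<in> {x. 0 < u x} + {y. 0 < v y}"
    then obtain x y where xy: "0 < u x" "0 < v y" "z = x + y" by (auto elim: set_plus_elim)
    define m where "m = min (u x) (v y)"
    have m: "0 < m" "m \<le> 1" using xy fuzzy_number_le_one[OF u, of x] by (auto simp: m_def)
    have "z \<in> fcut u m + fcut v m" using m xy by (auto simp: fcut_pos m_def)
    then have "m \<le> fadd u v z" using le_fadd_iff[OF u v m] by simp
    with m show "z \<in> {z. 0 < fadd u v z}" by simp
  qed
  then have "closure {x. 0 < u x} + closure {y. 0 < v y} \<subseteq> closure {z. 0 < fadd u v z}"
    using closure_sum closure_mono by (metis order_trans)
  then have "fcut u 0 + fcut v 0 \<subseteq> fcut (fadd u v) 0"
    by (simp add: fcut_def)
  with \<open>fcut (fadd u v) 0 \<subseteq> fcut u 0 + fcut v 0\<close> True show ?thesis by simp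
qed

lemma fuzzy_number_fadd:
  fixes u v :: "'a::euclidean_space \<Rightarrow> real"
  assumes u: "fuzzy_number u" and v: "fuzzy_number v"
  shows "fuzzy_number (fadd u v)"
  unfolding fuzzy_number_def
proof (intro conjI allI ballI)
  fix \<alpha> :: real assume "\<alpha> \<in> {0..1}"
  then have \<alpha>: "0 \<le> \<alpha>" "\<alpha> \<le> 1" by auto
  note cuts = fuzzy_number_cut[OF u \<alpha>] fuzzy_number_cut[OF v \<alpha>]
  show "fcut (fadd u v) \<alpha> \<noteq> {}"
    using cuts by (auto simp: fcut_fadd[OF u v \<alpha>])
  show "compact (fcut (fadd u v) \<alpha>)"
    using cuts by (simp add: fcut_fadd[OF u v \<alpha>] compact_set_plus)
  show "convex (fcut (fadd u v) \<alpha>)"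
    using cuts by (simp add: fcut_fadd[OF u v \<alpha>] convex_set_plus)
qed (simp_all add: fadd_nonneg fadd_le_one)

lemma fuzzy_number_zero: "fuzzy_number (indicator {0} :: 'a::euclidean_space \<Rightarrow> real)"
proof -
  have "fcut (indicator {0} :: 'a \<Rightarrow> real) \<alpha> = {0}" if "0 \<le> \<alpha>" "\<alpha> \<le> 1" for \<alpha>
    using that by (cases "\<alpha> = 0") (auto simp: fcut_def indicator_def)
  then show ?thesis unfolding fuzzy_number_def by simp
qed

lemma fuzzy_number_fsum:
  "(\<And>j. j \<in> {1..n} \<Longrightarrow> fuzzy_number (u j)) \<Longrightarrow> fuzzy_number (fsum u n)"
  by (induction n) (auto simp: fuzzy_number_zero fuzzy_number_fadd)

lemma mem_sendograph_iff:
  assumes "fuzzy_number u"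
  shows "(x, \<alpha>) \<in> sendograph u \<longleftrightarrow> \<alpha> \<in> {0..1} \<and> x \<in> fcut u \<alpha>"
proof (cases "\<alpha> = 0")
  case True
  then show ?thesis using assms by (auto simp: sendograph_def fuzzy_number_def)
next
  case False
  then show ?thesis using fcut_antimono[of 0 \<alpha> u] by (auto simp: sendograph_def fcut_pos)
qed

lemma sendograph_nonempty: "fuzzy_number u \<Longrightarrow> sendograph u \<noteq> {}"
  using fuzzy_number_cut(1)[of u 0] mem_sendograph_iff[of u _ 0] by fastforce

lemma bounded_sendograph:
  assumes "fuzzy_number u"
  shows "bounded (sendograph u)"
proof -
  have "compact (fcut u 0 \<times> {0..1::real})"
    using fuzzy_number_cut[OF assms, of 0] by (intro compact_Times) auto
  moreover have "sendograph u \<subseteq> fcut u 0 \<times> {0..1}" unfolding sendograph_def by auto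
  ultimately show ?thesis using compact_imp_bounded bounded_subset by blast
qed

lemma sendograph_lower:
  "fuzzy_number u \<Longrightarrow> (x, \<beta>) \<in> sendograph u \<Longrightarrow> 0 \<le> \<gamma> \<Longrightarrow> \<gamma> \<le> \<beta> \<Longrightarrow> (x, \<gamma>) \<in> sendograph u"
  using fcut_antimono[of \<gamma> \<beta> u] by (auto simp: mem_sendograph_iff)

lemma mem_sendograph_fadd_iff:
  fixes u v :: "'a::euclidean_space \<Rightarrow> real"
  assumes u: "fuzzy_number u" and v: "fuzzy_number v"
  shows "(z, \<alpha>) \<in> sendograph (fadd u v) \<longleftrightarrow>
    (\<exists>x y. z = x + y \<and> (x, \<alpha>) \<in> sendograph u \<and> (y, \<alpha>) \<in> sendograph v)"
  by (auto simp: mem_sendograph_iff u v fuzzy_number_fadd fcut_fadd Set_Algebras.set_plus_def; blast)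

lemma add_mem_sendograph_fadd:
  fixes u v :: "'a::euclidean_space \<Rightarrow> real"
  assumes u: "fuzzy_number u" and v: "fuzzy_number v"
    and "(x, \<beta>) \<in> sendograph u" "(y, \<gamma>) \<in> sendograph v"
  shows "(x + y, min \<beta> \<gamma>) \<in> sendograph (fadd u v)"
proof -
  have "0 \<le> min \<beta> \<gamma>" using assms by (auto simp: mem_sendograph_iff)
  then have "(x, min \<beta> \<gamma>) \<in> sendograph u" "(y, min \<beta> \<gamma>) \<in> sendograph v"
    using sendograph_lower[OF u] sendograph_lower[OF v] assms by auto
  then show ?thesis by (auto simp: mem_sendograph_fadd_iff[OF u v])
qed

lemma hausdorff_semi_sendograph_fadd_le:
  fixes a b c d :: "'a::euclidean_space \<Rightarrow> real"
  assumes a: "fuzzy_number a" and b: "fuzzy_number b" and c: "fuzzy_number c" and d: "fuzzy_number d"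
  shows "hausdorff_semi (sendograph (fadd a b)) (sendograph (fadd c d))
    \<le> hausdorff_semi (sendograph a) (sendograph c) + hausdorff_semi (sendograph b) (sendograph d)"
    (is "_ \<le> ?h\<^sub>1 + ?h\<^sub>2")
proof (rule hausdorff_semi_le)
  show "sendograph (fadd a b) \<noteq> {}" by (simp add: sendograph_nonempty fuzzy_number_fadd a b)
  fix p e assume "p \<in> sendograph (fadd a b)" and "(0::real) < e"
  then obtain x y \<alpha> where p: "p = (x + y, \<alpha>)"
    and x: "(x, \<alpha>) \<in> sendograph a" and y: "(y, \<alpha>) \<in> sendograph b"
    by (metis mem_sendograph_fadd_iff[OF a b] surj_pair)
  obtain x' \<beta> where x': "(x', \<beta>) \<in> sendograph c" "dist (x, \<alpha>) (x', \<beta>) < ?h\<^sub>1 + e/2"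
    using hausdorff_semi_approx[OF bounded_sendograph[OF a] sendograph_nonempty[OF c] x, of "e/2"]
      \<open>0 < e\<close> by auto
  obtain y' \<gamma> where y': "(y', \<gamma>) \<in> sendograph d" "dist (y, \<alpha>) (y', \<gamma>) < ?h\<^sub>2 + e/2"
    using hausdorff_semi_approx[OF bounded_sendograph[OF b] sendograph_nonempty[OF d] y, of "e/2"]
      \<open>0 < e\<close> by auto
  have "(x' + y', min \<beta> \<gamma>) \<in> sendograph (fadd c d)"
    using add_mem_sendograph_fadd[OF c d x'(1) y'(1)] .
  moreover have "dist p (x' + y', min \<beta> \<gamma>) < ?h\<^sub>1 + ?h\<^sub>2 + e"
    using dist_Pair_add_min_le[of x y \<alpha> x' y' \<beta> \<gamma>] x'(2) y'(2) p by simp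
  ultimately show "\<exists>q\<in>sendograph (fadd c d). dist p q < ?h\<^sub>1 + ?h\<^sub>2 + e" by blast
qed

lemma send_dist_fadd_le:
  fixes a b c d :: "'a::euclidean_space \<Rightarrow> real"
  assumes "fuzzy_number a" "fuzzy_number b" "fuzzy_number c" "fuzzy_number d"
  shows "send_dist (fadd a b) (fadd c d) \<le> send_dist a c + send_dist b d"
  using hausdorff_semi_sendograph_fadd_le[OF assms] hausdorff_semi_sendograph_fadd_le[of c d a b] assms
  unfolding send_dist_def hausdorff_dist_def by fastforce

lemma send_dist_self: "fuzzy_number u \<Longrightarrow> send_dist u u = 0"
  by (simp add: send_dist_def hausdorff_dist_def hausdorff_semi_self sendograph_nonempty)

lemma send_dist_fsum_le:
  fixes u v :: "nat \<Rightarrow> ('a::euclidean_space \<Rightarrow> real)"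
  assumes "\<And>j. j \<in> {1..n} \<Longrightarrow> fuzzy_number (u j)" "\<And>j. j \<in> {1..n} \<Longrightarrow> fuzzy_number (v j)"
  shows "send_dist (fsum u n) (fsum v n) \<le> (\<Sum>j=1..n. send_dist (u j) (v j))"
  using assms
proof (induction n)
  case 0
  then show ?case by (simp add: send_dist_self fuzzy_number_zero)
next
  case (Suc n)
  have "send_dist (fsum u (Suc n)) (fsum v (Suc n))
      \<le> send_dist (fsum u n) (fsum v n) + send_dist (u (Suc n)) (v (Suc n))"
    using Suc.prems fuzzy_number_fsum[of n u] fuzzy_number_fsum[of n v]
    by (simp add: send_dist_fadd_le)
  also have "\<dots> \<le> (\<Sum>j=1..Suc n. send_dist (u j) (v j))"
    using Suc by (simp add: sum.cl_ivl_Suc)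
  finally show ?case .
qed

theorem theorem2p4:
  fixes u v :: "nat \<Rightarrow> ('a::euclidean_space \<Rightarrow> real)" and n :: nat
  assumes "n \<ge> 1"
    and "\<And>j. j \<in> {1..n} \<Longrightarrow> fuzzy_number (u j)"
    and "\<And>j. j \<in> {1..n} \<Longrightarrow> fuzzy_number (v j)"
  shows "send_dist (fsum u n) (fsum v n) \<le> (\<Sum>j=1..n. send_dist (u j) (v j))"
  using assms(2,3) by (rule send_dist_fsum_le)

end
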